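(* Let $\Gamma$ be a single edge $ab$ with label $m\ge3$, let $X$ be the Cayley complex of the standard presentation of $A_\Gamma$, and let $\Lambda\subset X$ be a hypergraph. Suppose $\gamma$ is an edge-path in $X$ whose first and last edges are vertices of $\Lambda$ and none of whose other edges is a vertex of $\Lambda$. Then the word read along $\gamma$ is not of the form $a^kba^l$, $b^kab^l$, or $a^kb^l$ with $k,l\in\mathbb{Z}\setminus\{0\}$.
   Context: For a labelled edge $ab$ with label $m$, $A_\Gamma=\langle a,b\mid p_m(a,b)=p_m(b,a)\rangle$ where $p_m(a,b)$ is the alternating word $aba\cdots$ of length $m$. The Cayley complex $X$ has vertex set $A_\Gamma$, a directed edge labelled $s$ from $g$ to $gs$ for $s\in\{a,b\}$, and a $2m$-gon $2$-cell glued along each closed path reading $p_m(a,b)p_m(b,a)^{-1}$. The word read along an edge-path records the label of each edge with exponent $+1$ or $-1$ according to whether it is traversed along or against its direction. Two edges of the boundary of a $2m$-gon are opposite if they are at distance $m-1$ along the boundary. A hypergraph in $X$ is a connected component of the graph whose vertices are the edges of $X$ and which has, for each $2$-cell $R$ and each pair of opposite edges of $\partial R$, an edge joining them. *)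

theory Defs
  imports Main
begin

datatype gen = GA | GB

text \<open>A letter is a generator with exponent +1 (True) or -1 (False).\<close>
type_synonym letter = "gen \<times> bool"
type_synonym word = "letter list"

definition inv_word :: "word \<Rightarrow> word" where
  "inv_word w = rev (map (\<lambda>(s, e). (s, \<not> e)) w)"

definition alt_word :: "nat \<Rightarrow> gen \<Rightarrow> gen \<Rightarrow> word" where
  "alt_word m g h = map (\<lambda>i. (if even i then g else h, True)) [0..<m]"

definition relator :: "nat \<Rightarrow> word" where
  "relator m = alt_word m GA GB @ inv_word (alt_word m GB GA)"

text \<open>Equality in A_Gamma = < a, b | p_m(a,b) = p_m(b,a) >: the equivalence
  relation on words generated by free reduction and insertion of the relator.\<close>
inductive aeq :: "nat \<Rightarrow> word \<Rightarrow> word \<Rightarrow> bool" for m where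
  aeq_refl: "aeq m u u"
| aeq_sym: "aeq m u v \<Longrightarrow> aeq m v u"
| aeq_trans: "aeq m u v \<Longrightarrow> aeq m v w \<Longrightarrow> aeq m u w"
| aeq_free: "aeq m (u @ [(s, e), (s, \<not> e)] @ v) (u @ v)"
| aeq_rel: "aeq m (u @ relator m @ v) (u @ v)"

text \<open>Group elements (vertices of the Cayley complex X) are equivalence classes of words.\<close>
definition cls :: "nat \<Rightarrow> word \<Rightarrow> word set" where
  "cls m w = {v. aeq m w v}"

text \<open>An edge of X is determined by its initial vertex g and its label s;
  it goes from g to g s.\<close>
type_synonym edge = "word set \<times> gen"

definition edges_X :: "nat \<Rightarrow> edge set" where
  "edges_X m = {(cls m w, s) | w s. True}"

text \<open>The edge traversed when reading letter x from the vertex represented by w: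
  along its direction if x has exponent +1 (edge from w to w s), against its
  direction if the exponent is -1 (edge from w s^{-1} to w).\<close>
definition letter_edge :: "nat \<Rightarrow> word \<Rightarrow> letter \<Rightarrow> edge" where
  "letter_edge m w x = (if snd x then (cls m w, fst x) else (cls m (w @ [x]), fst x))"

text \<open>An edge-path in X is determined by its initial vertex (represented by the
  word v) and the word w read along it; its i-th edge (i < length w) is:\<close>
definition path_edge :: "nat \<Rightarrow> word \<Rightarrow> word \<Rightarrow> nat \<Rightarrow> edge" where
  "path_edge m v w i = letter_edge m (v @ take i w) (w ! i)"

text \<open>Opposite edges in a 2-cell: the 2-cell at vertex g has boundary the closed
  path reading the relator (length 2m) from g; edges at positions i and i+m
  (mod 2m) are at distance m-1 along the boundary.\<close>
definition hyp_adj :: "nat \<Rightarrow> edge \<Rightarrow> edge \<Rightarrow> bool" where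
  "hyp_adj m e f \<longleftrightarrow> (\<exists>g i. i < 2 * m \<and>
      e = path_edge m g (relator m) i \<and>
      f = path_edge m g (relator m) ((i + m) mod (2 * m)))"

definition is_hypergraph :: "nat \<Rightarrow> edge set \<Rightarrow> bool" where
  "is_hypergraph m L \<longleftrightarrow> (\<exists>e \<in> edges_X m. L = {f. (hyp_adj m)\<^sup>*\<^sup>* e f})"

definition pow_word :: "gen \<Rightarrow> int \<Rightarrow> word" where
  "pow_word g k = replicate (nat \<bar>k\<bar>) (g, k > 0)"

end

theory Submission
  imports Defs "HOL-Number_Theory.Cong"
begin

text \<open>Let a and b act on the integers as the reflections x \<mapsto> -x and x \<mapsto> 2 - x,
  with mirror points 0 and 1. Modulo m this is an action of A_Gamma (it factors through the
  dihedral group of order 2m). The edge (g, s) of X is assigned the mirror point of the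
  reflection g s g^-1, namely g(mirror s) mod m. Reading the relator from a vertex g, the i-th edge gets
  g(-i), so opposite edges of a 2-cell get the same point and this "wall" is constant
  on a hypergraph. For the three words in question, the walls of the first and the last
  edge differ by the image of 1 or 2 under an isometry of \<int>/m, which is nonzero when m \<ge> 3.\<close>

fun mirror :: "gen \<Rightarrow> int" where
  "mirror GA = 0"
| "mirror GB = 1"

definition reflect :: "gen \<Rightarrow> int \<Rightarrow> int" where
  "reflect s x = 2 * mirror s - x"

text \<open>Exponents are ignored: the generators act by involutions.\<close>

fun act :: "word \<Rightarrow> int \<Rightarrow> int" where
  "act [] x = x"
| "act (y # w) x = reflect (fst y) (act w x)"

lemma reflect_reflect [simp]: "reflect s (reflect s x) = x"
  by (simp add: reflect_def)

lemma reflect_mirror [simp]: "reflect s (mirror s) = mirror s"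
  by (simp add: reflect_def)

lemma act_append: "act (u @ v) x = act u (act v x)"
  by (induction u) auto

lemma act_map_fst_cong: "map fst u = map fst v \<Longrightarrow> act u x = act v x"
proof (induction u arbitrary: v)
  case (Cons y u)
  then obtain z v' where "v = z # v'" "fst z = fst y" "map fst u = map fst v'"
    by (cases v) auto
  with Cons.IH show ?case by simp
qed simp

lemma act_replicate_mirror: "act (replicate n (s, e)) (mirror s) = mirror s"
  by (induction n) auto

lemma cong_reflect_iff: "[reflect s x = reflect s y] (mod n) \<longleftrightarrow> [x = y] (mod n)"
  by (simp add: reflect_def cong_iff_dvd_diff dvd_diff_commute)

lemma cong_act_iff: "[act u x = act u y] (mod n) \<longleftrightarrow> [x = y] (mod n)"
  by (induction u) (simp_all add: cong_reflect_iff)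

lemma act_alt_word:
  "act (alt_word n GA GB) x = (if even n then x - int n else 1 - int n - x)"
  by (induction n arbitrary: x) (auto simp: alt_word_def act_append reflect_def)

lemma map_fst_relator: "map fst (relator m) = map fst (alt_word (2 * m) GA GB)"
proof (rule nth_equalityI)
  fix i assume "i < length (map fst (relator m))"
  then have "i < 2 * m" by (simp add: relator_def inv_word_def alt_word_def)
  moreover have "even (m - Suc j) \<longleftrightarrow> odd (m + j)" if "j < m" for j
    using that by (auto dest!: less_imp_Suc_add)
  ultimately show "map fst (relator m) ! i = map fst (alt_word (2 * m) GA GB) ! i"
    by (auto simp: relator_def inv_word_def alt_word_def nth_append rev_nth)
qed (simp add: relator_def inv_word_def alt_word_def)

lemma act_relator: "act (relator m) x = x - 2 * int m"
  using act_map_fst_cong[OF map_fst_relator] by (simp add: act_alt_word)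

lemma cong_act_aeq: "aeq m u v \<Longrightarrow> [act u x = act v x] (mod int m)"
proof (induction rule: aeq.induct)
  case (aeq_sym u v)
  then show ?case by (simp add: cong_sym_eq)
next
  case (aeq_trans u v w)
  then show ?case by (blast intro: cong_trans)
next
  case (aeq_rel u v)
  have "[act v x - 2 * int m = act v x] (mod int m)"
    by (simp add: cong_iff_dvd_diff)
  then show ?case by (simp add: act_append act_relator cong_act_iff)
qed (simp_all add: act_append)

text \<open>A vertex of X is a class of words, so the wall is defined as a set of residues;
  by wall_cls it is a singleton.\<close>

definition wall :: "nat \<Rightarrow> edge \<Rightarrow> int set" where
  "wall m e = {act u (mirror (snd e)) mod int m | u. u \<in> fst e}"

lemma wall_cls: "wall m (cls m w, s) = {act w (mirror s) mod int m}"
proof -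
  have "act u (mirror s) mod int m = act w (mirror s) mod int m" if "aeq m w u" for u
    using cong_act_aeq[OF that] by (simp add: cong_def)
  then show ?thesis
    by (auto simp: wall_def cls_def intro: aeq_refl)
qed

lemma wall_letter_edge: "wall m (letter_edge m p x) = {act p (mirror (fst x)) mod int m}"
  by (cases x) (simp add: letter_edge_def wall_cls act_append)

lemma wall_path_edge:
  "wall m (path_edge m v w i) = {act (v @ take i w) (mirror (fst (w ! i))) mod int m}"
  by (simp add: path_edge_def wall_letter_edge)

lemma act_relator_prefix_mirror:
  assumes "i < 2 * m"
  shows "act (take i (relator m)) (mirror (fst (relator m ! i))) = - int i"
proof -
  have "map fst (take i (relator m)) = map fst (alt_word i GA GB)"
    using assms by (simp add: map_fst_relator flip: take_map) (simp add: alt_word_def take_map)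
  moreover have "fst (relator m ! i) = (if even i then GA else GB)"
  proof -
    have "length (relator m) = 2 * m"
      by (simp add: relator_def inv_word_def alt_word_def)
    then have "fst (relator m ! i) = map fst (relator m) ! i"
      using assms by simp
    then show ?thesis
      using assms by (simp add: map_fst_relator alt_word_def)
  qed
  ultimately show ?thesis
    by (simp add: act_map_fst_cong act_alt_word)
qed

lemma wall_hyp_adj: "hyp_adj m e f \<Longrightarrow> wall m e = wall m f"
proof -
  assume "hyp_adj m e f"
  then obtain g i where i: "i < 2 * m" and e: "e = path_edge m g (relator m) i"
    and f: "f = path_edge m g (relator m) ((i + m) mod (2 * m))"
    unfolding hyp_adj_def by blast
  define j where "j = (i + m) mod (2 * m)"
  have "j < 2 * m" using i by (simp add: j_def)
  have "[i = j] (mod m)"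
    by (simp add: j_def cong_def mod_mod_cancel)
  then have "[act g (- int i) = act g (- int j)] (mod int m)"
    by (simp add: cong_act_iff cong_minus_minus_iff flip: cong_int_iff)
  then show ?thesis
    using e f i \<open>j < 2 * m\<close>
    by (simp add: wall_path_edge act_append act_relator_prefix_mirror cong_def j_def)
qed

lemma wall_hypergraph:
  assumes "is_hypergraph m L" "e \<in> L" "f \<in> L"
  shows "wall m e = wall m f"
proof -
  obtain e0 where L: "L = {f. (hyp_adj m)\<^sup>*\<^sup>* e0 f}"
    using assms(1) unfolding is_hypergraph_def by blast
  have "wall m e0 = wall m e'" if "(hyp_adj m)\<^sup>*\<^sup>* e0 e'" for e'
    using that by (induction rule: rtranclp_induct) (simp_all add: wall_hyp_adj)
  then show ?thesis
    using assms(2,3) unfolding L by (metis mem_Collect_eq)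
qed

lemma hypergraph_path_ends:
  assumes "is_hypergraph m L" "w \<noteq> []"
    and "path_edge m v w 0 \<in> L" "path_edge m v w (length w - 1) \<in> L"
  shows "[act (butlast w) (mirror (fst (last w))) = mirror (fst (hd w))] (mod int m)"
proof -
  have "wall m (path_edge m v w (length w - 1)) = wall m (path_edge m v w 0)"
    using wall_hypergraph assms(1,3,4) by blast
  then have "[act v (act (butlast w) (mirror (fst (last w)))) = act v (mirror (fst (hd w)))] (mod int m)"
    using assms(2)
    by (simp add: wall_path_edge cong_def act_append butlast_conv_take hd_conv_nth last_conv_nth)
  then show ?thesis
    by (simp add: cong_act_iff)
qed

lemma pow_word_replicate: "k \<noteq> 0 \<Longrightarrow> \<exists>n e. 0 < n \<and> pow_word s k = replicate n (s, e)"
  by (auto simp: pow_word_def)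

lemma hypergraph_path_ends_powers:
  assumes "is_hypergraph m L" "k \<noteq> 0" "l \<noteq> 0" "w = pow_word s k @ u @ pow_word t l"
    and "path_edge m v w 0 \<in> L" "path_edge m v w (length w - 1) \<in> L"
  shows "[act u (mirror t) = mirror s] (mod int m)"
proof -
  obtain K e where K: "0 < K" "pow_word s k = replicate K (s, e)"
    using pow_word_replicate[OF assms(2)] by blast
  obtain L' e' where L': "0 < L'" "pow_word t l = replicate L' (t, e')"
    using pow_word_replicate[OF assms(3)] by blast
  have "w \<noteq> []" "hd w = (s, e)" "last w = (t, e')"
    and "butlast w = replicate K (s, e) @ u @ replicate (L' - 1) (t, e')"
    using assms(4) K L' by (auto simp: butlast_append gr0_conv_Suc replicate_append_same[symmetric])
  then have "[act (replicate K (s, e)) (act u (mirror t)) = act (replicate K (s, e)) (mirror s)] (mod int m)"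
    using hypergraph_path_ends[OF assms(1) _ assms(5,6)]
    by (simp add: act_append act_replicate_mirror)
  then show ?thesis
    by (simp add: cong_act_iff)
qed

lemma not_cong_if_close:
  fixes x y n :: int
  assumes "x \<noteq> y" "\<bar>x - y\<bar> < n"
  shows "\<not> [x = y] (mod n)"
  using assms dvd_imp_le_int[of "x - y" n] by (auto simp: cong_iff_dvd_diff)

theorem lemma4p4:
  fixes m :: nat and L :: "edge set" and v w :: word
  assumes "m \<ge> 3"
    and "is_hypergraph m L"
    and "w \<noteq> []"
    and "path_edge m v w 0 \<in> L"
    and "path_edge m v w (length w - 1) \<in> L"
    and "\<forall>i. 0 < i \<and> i < length w - 1 \<longrightarrow> path_edge m v w i \<notin> L"
  shows "\<not> (\<exists>k l :: int. k \<noteq> 0 \<and> l \<noteq> 0 \<and>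
           (w = pow_word GA k @ [(GB, True)] @ pow_word GA l \<or>
            w = pow_word GB k @ [(GA, True)] @ pow_word GB l \<or>
            w = pow_word GA k @ pow_word GB l))"
proof
  assume "\<exists>k l :: int. k \<noteq> 0 \<and> l \<noteq> 0 \<and>
           (w = pow_word GA k @ [(GB, True)] @ pow_word GA l \<or>
            w = pow_word GB k @ [(GA, True)] @ pow_word GB l \<or>
            w = pow_word GA k @ pow_word GB l)"
  then obtain k l :: int and s t u where "k \<noteq> 0" "l \<noteq> 0"
    and w: "w = pow_word s k @ u @ pow_word t l"
    and stu: "(s, t, u) \<in> {(GA, GA, [(GB, True)]), (GB, GB, [(GA, True)]), (GA, GB, [])}"
    by (metis append.left_neutral insert_iff)
  then have "[act u (mirror t) = mirror s] (mod int m)"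
    using hypergraph_path_ends_powers assms(2,4,5) by blast
  moreover have "act u (mirror t) \<noteq> mirror s" "\<bar>act u (mirror t) - mirror s\<bar> < int m"
    using stu assms(1) by (auto simp: reflect_def)
  ultimately show False
    using not_cong_if_close by blast
qed

end
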